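(* Let $y\in V(D^+)$ and let $v_j,v_i$ be two descendants of $y$ in $D^+$ with $d_s(v_j)\le d_s(v_i)$. If $g^*(v_j)\neq\infty$, then $\min_{u\prec y} g(v_i,u)\ge g^*(v_j)$.
   Context: $G=(V,E,w)$ is a simple, connected, undirected graph with positive edge lengths, $s,t\in V$, $d(\cdot,\cdot)$ the shortest path distance in $G$, $d_s(v)=d(s,v)$. $D$ is the union of all shortest $st$-paths of $G$, and $D^+$ is the directed acyclic graph obtained from $D$ by orienting every edge toward $t$. $x\prec y$ means $x$ is an ancestor of $y$ in $D^+$ (a directed path of positive length from $x$ to $y$ exists); a descendant of $y$ is a vertex $v$ with $y\prec v$. For $x\neq s$, $v\neq x$ is an $s$-dominator of $x$ if every directed path from $s$ to $x$ in $D^+$ contains $v$, and $I_s(x)$ is the $s$-dominator of $x$ closest to $x$ (every other $s$-dominator of $x$ is an $s$-dominator of $I_s(x)$). Symmetrically, for $x\neq t$, $v\neq x$ is a $t$-dominator of $x$ if every directed path from $x$ to $t$ in $D^+$ contains $v$, and $I_t(x)$ is the $t$-dominator closest to $x$. For $x\neq s$, $C(x)=\{v: I_s(x)\prec v\prec x\}$. For $x\neq s$ and $y\in V(D^+)$, $g(x,y)=d(y,x)$ if $y\in C(x)$ and $x\prec I_t(y)$, and $g(x,y)=\infty$ otherwise; $g^*(x)=\min_y g(x,y)$. A minimum over the empty set is $\infty$. *)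

theory Defs
  imports Main "HOL-Library.Extended_Real"
begin

definition walk :: "('a \<times> 'a) set \<Rightarrow> 'a list \<Rightarrow> 'a \<Rightarrow> 'a \<Rightarrow> bool" where
  "walk E p u v \<longleftrightarrow> p \<noteq> [] \<and> hd p = u \<and> last p = v \<and>
     (\<forall>i. Suc i < length p \<longrightarrow> (p ! i, p ! Suc i) \<in> E)"

definition walk_len :: "('a \<Rightarrow> 'a \<Rightarrow> real) \<Rightarrow> 'a list \<Rightarrow> real" where
  "walk_len w p = sum_list (map (\<lambda>(a, b). w a b) (zip p (tl p)))"

definition dist_G :: "('a \<times> 'a) set \<Rightarrow> ('a \<Rightarrow> 'a \<Rightarrow> real) \<Rightarrow> 'a \<Rightarrow> 'a \<Rightarrow> real" where
  "dist_G E w u v = Inf (walk_len w ` {p. walk E p u v})"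

definition shortest_st :: "('a \<times> 'a) set \<Rightarrow> ('a \<Rightarrow> 'a \<Rightarrow> real) \<Rightarrow> 'a \<Rightarrow> 'a \<Rightarrow> 'a list \<Rightarrow> bool" where
  "shortest_st E w s t p \<longleftrightarrow> walk E p s t \<and> walk_len w p = dist_G E w s t"

definition Darc :: "('a \<times> 'a) set \<Rightarrow> ('a \<Rightarrow> 'a \<Rightarrow> real) \<Rightarrow> 'a \<Rightarrow> 'a \<Rightarrow> ('a \<times> 'a) set" where
  "Darc E w s t = {(u, v). \<exists>p i. shortest_st E w s t p \<and> Suc i < length p \<and>
                               p ! i = u \<and> p ! Suc i = v}"

definition DV :: "('a \<times> 'a) set \<Rightarrow> ('a \<Rightarrow> 'a \<Rightarrow> real) \<Rightarrow> 'a \<Rightarrow> 'a \<Rightarrow> 'a set" where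
  "DV E w s t = {v. \<exists>p. shortest_st E w s t p \<and> v \<in> set p}"

definition prec :: "('a \<times> 'a) set \<Rightarrow> ('a \<Rightarrow> 'a \<Rightarrow> real) \<Rightarrow> 'a \<Rightarrow> 'a \<Rightarrow> 'a \<Rightarrow> 'a \<Rightarrow> bool" where
  "prec E w s t x y \<longleftrightarrow> (x, y) \<in> (Darc E w s t)\<^sup>+"

definition dpath :: "('a \<times> 'a) set \<Rightarrow> ('a \<Rightarrow> 'a \<Rightarrow> real) \<Rightarrow> 'a \<Rightarrow> 'a \<Rightarrow> 'a list \<Rightarrow> 'a \<Rightarrow> 'a \<Rightarrow> bool" where
  "dpath E w s t p u v \<longleftrightarrow> walk (Darc E w s t) p u v"

definition sdom :: "('a \<times> 'a) set \<Rightarrow> ('a \<Rightarrow> 'a \<Rightarrow> real) \<Rightarrow> 'a \<Rightarrow> 'a \<Rightarrow> 'a \<Rightarrow> 'a \<Rightarrow> bool" where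
  "sdom E w s t v x \<longleftrightarrow> v \<noteq> x \<and> (\<forall>p. dpath E w s t p s x \<longrightarrow> v \<in> set p)"

definition tdom :: "('a \<times> 'a) set \<Rightarrow> ('a \<Rightarrow> 'a \<Rightarrow> real) \<Rightarrow> 'a \<Rightarrow> 'a \<Rightarrow> 'a \<Rightarrow> 'a \<Rightarrow> bool" where
  "tdom E w s t v x \<longleftrightarrow> v \<noteq> x \<and> (\<forall>p. dpath E w s t p x t \<longrightarrow> v \<in> set p)"

definition Is :: "('a \<times> 'a) set \<Rightarrow> ('a \<Rightarrow> 'a \<Rightarrow> real) \<Rightarrow> 'a \<Rightarrow> 'a \<Rightarrow> 'a \<Rightarrow> 'a" where
  "Is E w s t x = (THE v. sdom E w s t v x \<and>
      (\<forall>u. sdom E w s t u x \<and> u \<noteq> v \<longrightarrow> sdom E w s t u v))"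

definition It :: "('a \<times> 'a) set \<Rightarrow> ('a \<Rightarrow> 'a \<Rightarrow> real) \<Rightarrow> 'a \<Rightarrow> 'a \<Rightarrow> 'a \<Rightarrow> 'a" where
  "It E w s t x = (THE v. tdom E w s t v x \<and>
      (\<forall>u. tdom E w s t u x \<and> u \<noteq> v \<longrightarrow> tdom E w s t u v))"

definition Cset :: "('a \<times> 'a) set \<Rightarrow> ('a \<Rightarrow> 'a \<Rightarrow> real) \<Rightarrow> 'a \<Rightarrow> 'a \<Rightarrow> 'a \<Rightarrow> 'a set" where
  "Cset E w s t x = {v. prec E w s t (Is E w s t x) v \<and> prec E w s t v x}"

definition gfun :: "('a \<times> 'a) set \<Rightarrow> ('a \<Rightarrow> 'a \<Rightarrow> real) \<Rightarrow> 'a \<Rightarrow> 'a \<Rightarrow> 'a \<Rightarrow> 'a \<Rightarrow> ereal" where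
  "gfun E w s t x y =
     (if y \<in> Cset E w s t x \<and> prec E w s t x (It E w s t y)
      then ereal (dist_G E w y x) else \<infinity>)"

text \<open>g*(x) = min over y in V(D^+) of g(x,y); empty infimum is \<infinity>\<close>
definition gstar :: "('a \<times> 'a) set \<Rightarrow> ('a \<Rightarrow> 'a \<Rightarrow> real) \<Rightarrow> 'a \<Rightarrow> 'a \<Rightarrow> 'a \<Rightarrow> ereal" where
  "gstar E w s t x = (INF y \<in> DV E w s t. gfun E w s t x y)"

end

theory Submission
  imports Defs
begin

text \<open>
  Along arcs of D+ the distance from s strictly increases, and for u \<prec> v the distance d(u,v)
  equals d(s,v) - d(s,u). Fix an ancestor u of y with g(vi,u) finite, so vi \<prec> I_t(u).
  Since I_t(u) lies on every path u \<rightarrow> vj \<rightarrow> t and is farther from s than vi, hence than vj,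
  it lies beyond vj: vj \<prec> I_t(u). Likewise I_s(vj) lies on every path s \<rightarrow> u \<rightarrow> vj. If
  I_s(vj) \<prec> u then u \<in> C(vj) and g*(vj) \<le> g(vj,u) = d(u,vj) \<le> d(u,vi). Otherwise
  d(s,u) \<le> d(s,I_s(vj)), and any y' with g(vj,y') finite lies in C(vj), so
  g*(vj) \<le> d(y',vj) < d(s,vj) - d(s,I_s(vj)) \<le> d(u,vi).
\<close>

lemma walk_Nil [simp]: "\<not> walk R [] a b"
  by (simp add: walk_def)

lemma walk_singleton [simp]: "walk R [x] a b \<longleftrightarrow> a = x \<and> b = x"
  by (auto simp: walk_def)

lemma walk_Cons_Cons:
  "walk R (x # y # p) a b \<longleftrightarrow> a = x \<and> (x, y) \<in> R \<and> walk R (y # p) y b"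
  by (auto simp: walk_def nth_Cons split: nat.splits)

lemma walk_append:
  "walk R p a b \<Longrightarrow> walk R q b c \<Longrightarrow> walk R (p @ tl q) a c"
proof (induction p arbitrary: a rule: induct_list012)
  case (2 x)
  then show ?case by (cases q) (auto simp: walk_def)
next
  case (3 x y p)
  then show ?case by (simp add: walk_Cons_Cons)
qed simp

lemma walk_rev: "walk R p a b \<Longrightarrow> walk (R\<inverse>) (rev p) b a"
proof (induction p arbitrary: a rule: induct_list012)
  case (3 x y p)
  then have "walk (R\<inverse>) (rev (y # p) @ tl [y, x]) b x"
    by (intro walk_append) (auto simp: walk_Cons_Cons)
  then show ?case using 3 by (simp add: walk_Cons_Cons)
qed auto

lemma walk_converse: "walk (R\<inverse>) p a b \<longleftrightarrow> walk R (rev p) b a"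
  using walk_rev[of R "rev p" b a] walk_rev[of "R\<inverse>" p a b] by auto

lemma walk_tl_trancl: "walk R p a b \<Longrightarrow> x \<in> set (tl p) \<Longrightarrow> (a, x) \<in> R\<^sup>+"
proof (induction p arbitrary: a rule: induct_list012)
  case (3 x y p)
  then show ?case by (auto simp: walk_Cons_Cons intro: trancl_into_trancl2)
qed auto

lemma walk_mem_rtrancl_hd: "walk R p a b \<Longrightarrow> x \<in> set p \<Longrightarrow> (a, x) \<in> R\<^sup>*"
  using walk_tl_trancl[of R p a b x] by (cases p) (auto simp: walk_def)

lemma walk_mem_rtrancl_last: "walk R p a b \<Longrightarrow> x \<in> set p \<Longrightarrow> (x, b) \<in> R\<^sup>*"
  using walk_mem_rtrancl_hd[OF walk_rev, of R p a b x] by (simp add: rtrancl_converse)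

lemma rtrancl_imp_walk: "(a, b) \<in> R\<^sup>* \<Longrightarrow> \<exists>p. walk R p a b"
proof (induction rule: rtrancl_induct)
  case base
  show ?case by (auto intro: exI[of _ "[a]"])
next
  case (step y z)
  then obtain p where "walk R p a y" by blast
  then have "walk R (p @ tl [y, z]) a z"
    using step by (intro walk_append) (auto simp: walk_Cons_Cons)
  then show ?case ..
qed

lemma walk_take: "walk R p a b \<Longrightarrow> i < length p \<Longrightarrow> walk R (take (Suc i) p) a (p ! i)"
  by (auto simp: walk_def hd_take last_conv_nth)

lemma walk_drop: "walk R p a b \<Longrightarrow> i < length p \<Longrightarrow> walk R (drop i p) (p ! i) b"
  by (auto simp: walk_def hd_drop_conv_nth)

definition dominates :: "('a \<times> 'a) set \<Rightarrow> 'a \<Rightarrow> 'a \<Rightarrow> 'a \<Rightarrow> bool" where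
  "dominates R r v x \<longleftrightarrow> v \<noteq> x \<and> (\<forall>p. walk R p r x \<longrightarrow> v \<in> set p)"

definition is_idom :: "('a \<times> 'a) set \<Rightarrow> 'a \<Rightarrow> 'a \<Rightarrow> 'a \<Rightarrow> bool" where
  "is_idom R r v x \<longleftrightarrow> dominates R r v x \<and> (\<forall>u. dominates R r u x \<and> u \<noteq> v \<longrightarrow> dominates R r u v)"

definition idom :: "('a \<times> 'a) set \<Rightarrow> 'a \<Rightarrow> 'a \<Rightarrow> 'a" where
  "idom R r x = (THE v. is_idom R r v x)"

lemma root_dominates: "r \<noteq> x \<Longrightarrow> dominates R r r x"
  by (auto simp: dominates_def walk_def intro: hd_in_set)

lemma dominates_comparable:
  assumes "dominates R r v x" and "(r, z) \<in> R\<^sup>*" and "(z, x) \<in> R\<^sup>*"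
  shows "(v, z) \<in> R\<^sup>* \<or> (z, v) \<in> R\<^sup>+"
proof -
  obtain p q where p: "walk R p r z" and q: "walk R q z x"
    using assms(2,3) by (blast dest: rtrancl_imp_walk)
  have "v \<in> set (p @ tl q)"
    using assms(1) walk_append[OF p q] by (auto simp: dominates_def)
  then show ?thesis
    using walk_mem_rtrancl_last[OF p] walk_tl_trancl[OF q] by auto
qed

lemma dominates_between:
  assumes "dominates R r v x" and "(r, x) \<in> R\<^sup>*"
  shows "(r, v) \<in> R\<^sup>* \<and> (v, x) \<in> R\<^sup>+"
proof -
  obtain p where p: "walk R p r x" using assms(2) by (blast dest: rtrancl_imp_walk)
  then have "v \<in> set p" "v \<noteq> x" using assms(1) by (auto simp: dominates_def)
  then show ?thesis
    using walk_mem_rtrancl_hd[OF p] walk_mem_rtrancl_last[OF p] by (auto simp: rtrancl_eq_or_trancl)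
qed

lemma less_on_trancl:
  fixes f :: "'a \<Rightarrow> 'b::order"
  assumes "\<And>a b. (a, b) \<in> R \<Longrightarrow> f a < f b" and "(a, b) \<in> R\<^sup>+"
  shows "f a < f b"
  using assms(2) by induction (auto dest: assms(1))

lemma is_idom_unique:
  fixes f :: "'a \<Rightarrow> 'b::order"
  assumes mono: "\<And>a b. (a, b) \<in> R \<Longrightarrow> f a < f b" and rx: "(r, x) \<in> R\<^sup>*"
    and "is_idom R r a x" and "is_idom R r b x"
  shows "a = b"
proof (rule ccontr)
  assume "a \<noteq> b"
  then have ab: "dominates R r a b" and ba: "dominates R r b a"
    and ax: "dominates R r a x" and bx: "dominates R r b x"
    using assms(3,4) by (auto simp: is_idom_def)
  have "(a, b) \<in> R\<^sup>+"
    using dominates_between[OF ab] dominates_between[OF bx rx] by simp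
  moreover have "(b, a) \<in> R\<^sup>+"
    using dominates_between[OF ba] dominates_between[OF ax rx] by simp
  ultimately show False using less_on_trancl[of R f, OF mono] by (metis less_asym)
qed

lemma is_idom_exists:
  fixes f :: "'a \<Rightarrow> 'b::linorder"
  assumes mono: "\<And>a b. (a, b) \<in> R \<Longrightarrow> f a < f b"
    and rx: "(r, x) \<in> R\<^sup>*" and "x \<noteq> r"
  shows "\<exists>v. is_idom R r v x"
proof -
  \<comment> \<open>The dominator of x maximising f is immediate.\<close>
  define A where "A = {v. dominates R r v x}"
  obtain p where "walk R p r x" using rx by (blast dest: rtrancl_imp_walk)
  then have "A \<subseteq> set p" by (auto simp: A_def dominates_def)
  then have finA: "finite A" by (rule finite_subset) simp
  moreover have "r \<in> A" using assms(3) by (simp add: A_def root_dominates)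
  ultimately have "Max (f ` A) \<in> f ` A" by (intro Max_in) auto
  then obtain v where vx: "dominates R r v x" and v_Max: "f v = Max (f ` A)"
    by (auto simp: A_def)
  have "dominates R r u v" if u: "dominates R r u x" "u \<noteq> v" for u
    unfolding dominates_def
  proof (intro conjI allI impI)
    show "u \<noteq> v" by fact
    fix q assume q: "walk R q r v"
    obtain q' where q': "walk R q' v x"
      using dominates_between[OF vx rx] by (blast dest: trancl_into_rtrancl rtrancl_imp_walk)
    have "u \<in> set (q @ tl q')"
      using u walk_append[OF q q'] by (auto simp: dominates_def)
    moreover have "u \<notin> set (tl q')"
    proof
      assume "u \<in> set (tl q')"
      then have "f v < f u" using walk_tl_trancl[OF q'] less_on_trancl[of R f, OF mono] by blast
      moreover have "f u \<le> f v" unfolding v_Max using finA u by (simp add: A_def)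
      ultimately show False by simp
    qed
    ultimately show "u \<in> set q" by simp
  qed
  then show ?thesis using vx by (auto simp: is_idom_def)
qed

lemma idom_dominates:
  fixes f :: "'a \<Rightarrow> 'b::linorder"
  assumes "\<And>a b. (a, b) \<in> R \<Longrightarrow> f a < f b" and "(r, x) \<in> R\<^sup>*" and "x \<noteq> r"
  shows "dominates R r (idom R r x) x"
proof -
  obtain v where v: "is_idom R r v x" using is_idom_exists[of R f, OF assms] by blast
  then have "is_idom R r (idom R r x) x"
    unfolding idom_def by (rule theI) (rule is_idom_unique[of R f, OF assms(1,2) _ v])
  then show ?thesis by (simp add: is_idom_def)
qed

lemma Is_eq_idom: "Is E w s t x = idom (Darc E w s t) s x"
  unfolding Is_def idom_def is_idom_def sdom_def dpath_def dominates_def ..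

lemma It_eq_idom: "It E w s t x = idom ((Darc E w s t)\<inverse>) t x"
proof -
  have "tdom E w s t = dominates ((Darc E w s t)\<inverse>) t"
    unfolding tdom_def dpath_def dominates_def walk_converse
    by (metis set_rev rev_rev_ident)
  then show ?thesis unfolding It_def idom_def is_idom_def by simp
qed

lemma walk_len_singleton [simp]: "walk_len w [x] = 0"
  by (simp add: walk_len_def)

lemma walk_len_Cons_Cons [simp]: "walk_len w (x # y # p) = w x y + walk_len w (y # p)"
  by (simp add: walk_len_def)

lemma walk_len_append:
  "p \<noteq> [] \<Longrightarrow> q \<noteq> [] \<Longrightarrow> last p = hd q \<Longrightarrow>
    walk_len w (p @ tl q) = walk_len w p + walk_len w q"
proof (induction p rule: induct_list012)
  case (2 x)
  then show ?case by (cases q) auto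
qed auto

lemma walk_len_nonneg:
  "(\<And>a b. (a, b) \<in> R \<Longrightarrow> w a b > 0) \<Longrightarrow> walk R p x y \<Longrightarrow> walk_len w p \<ge> 0"
proof (induction p arbitrary: x rule: induct_list012)
  case (3 a b p)
  then show ?case by (fastforce simp: walk_Cons_Cons intro: add_nonneg_nonneg less_imp_le)
qed auto

lemma gstar_le_gfun: "y \<in> DV E w s t \<Longrightarrow> gstar E w s t x \<le> gfun E w s t x y"
  unfolding gstar_def by (rule INF_lower)

locale positive_lengths =
  fixes E :: "('a \<times> 'a) set" and w :: "'a \<Rightarrow> 'a \<Rightarrow> real" and s t :: 'a
  assumes pos: "\<And>a b. (a, b) \<in> E \<Longrightarrow> w a b > 0"
begin

abbreviation "D \<equiv> Darc E w s t"
abbreviation "ds \<equiv> dist_G E w s"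

lemma dist_le_walk_len: "walk E p a b \<Longrightarrow> dist_G E w a b \<le> walk_len w p"
  unfolding dist_G_def
  by (rule cInf_lower) (auto intro!: bdd_belowI[of _ 0] walk_len_nonneg[OF pos])

lemma dist_triangle:
  assumes "walk E p a b" and "walk E q b c"
  shows "dist_G E w a c \<le> dist_G E w a b + dist_G E w b c"
proof -
  have "dist_G E w a c - walk_len w q' \<le> walk_len w p'"
    if p': "walk E p' a b" and q': "walk E q' b c" for p' q'
  proof -
    have "dist_G E w a c \<le> walk_len w (p' @ tl q')"
      using dist_le_walk_len walk_append[OF p' q'] by blast
    also have "\<dots> = walk_len w p' + walk_len w q'"
      using p' q' by (intro walk_len_append) (auto simp: walk_def)
    finally show ?thesis by simp
  qed
  then have "dist_G E w a c - walk_len w q' \<le> dist_G E w a b" if "walk E q' b c" for q'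
    using that assms(1) unfolding dist_G_def by (intro cInf_greatest) auto
  then have "dist_G E w a c - dist_G E w a b \<le> dist_G E w b c"
    using assms(2) unfolding dist_G_def by (intro cInf_greatest) (auto simp: algebra_simps)
  then show ?thesis by simp
qed

lemma shortest_st_prefix_dist:
  assumes p: "shortest_st E w s t p" and i: "i < length p"
  shows "ds (p ! i) = walk_len w (take (Suc i) p)"
proof -
  have wp: "walk E p s t" and lp: "walk_len w p = ds t"
    using p by (auto simp: shortest_st_def)
  have pre: "walk E (take (Suc i) p) s (p ! i)" and suf: "walk E (drop i p) (p ! i) t"
    using walk_take[OF wp i] walk_drop[OF wp i] by blast+
  have "walk_len w (take (Suc i) p) + walk_len w (drop i p) = walk_len w p"
    using i walk_len_append[of "take (Suc i) p" "drop i p" w] pre suf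
    by (auto simp: walk_def take_Suc_conv_app_nth Cons_nth_drop_Suc)
  moreover have "ds t \<le> ds (p ! i) + dist_G E w (p ! i) t" using dist_triangle[OF pre suf] .
  moreover have "ds (p ! i) \<le> walk_len w (take (Suc i) p)" using dist_le_walk_len[OF pre] .
  moreover have "dist_G E w (p ! i) t \<le> walk_len w (drop i p)" using dist_le_walk_len[OF suf] .
  ultimately show ?thesis using lp by linarith
qed

lemma Darc_edge:
  assumes "(a, b) \<in> D"
  shows "(a, b) \<in> E \<and> ds b = ds a + w a b"
proof -
  obtain p i where p: "shortest_st E w s t p"
    and i: "Suc i < length p" "p ! i = a" "p ! Suc i = b"
    using assms by (auto simp: Darc_def)
  have "(a, b) \<in> E" using p i by (auto simp: shortest_st_def walk_def)
  have "ds b = walk_len w (take (Suc i) p @ tl [a, b])"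
    using shortest_st_prefix_dist[OF p, of "Suc i"] i by (simp add: take_Suc_conv_app_nth)
  also have "\<dots> = walk_len w (take (Suc i) p) + walk_len w [a, b]"
    using i by (intro walk_len_append) (auto simp: take_Suc_conv_app_nth)
  also have "walk_len w (take (Suc i) p) = ds a"
    using shortest_st_prefix_dist[OF p, of i] i by simp
  finally show ?thesis using \<open>(a, b) \<in> E\<close> by simp
qed

lemma ds_less_Darc: "(a, b) \<in> D \<Longrightarrow> ds a < ds b"
  using Darc_edge pos by fastforce

lemma ds_less_Darc_trancl: "(a, b) \<in> D\<^sup>+ \<Longrightarrow> ds a < ds b"
  by (induction rule: trancl_induct) (auto dest: ds_less_Darc)

lemma ds_le_Darc_rtrancl: "(a, b) \<in> D\<^sup>* \<Longrightarrow> ds a \<le> ds b"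
  by (auto simp: rtrancl_eq_or_trancl dest: ds_less_Darc_trancl)

lemma DV_rtrancl: "x \<in> DV E w s t \<Longrightarrow> (s, x) \<in> D\<^sup>* \<and> (x, t) \<in> D\<^sup>*"
proof -
  assume "x \<in> DV E w s t"
  then obtain p where p: "shortest_st E w s t p" and x: "x \<in> set p"
    by (auto simp: DV_def)
  then have wp: "walk D p s t" by (auto simp: shortest_st_def walk_def Darc_def)
  show ?thesis using walk_mem_rtrancl_hd[OF wp x] walk_mem_rtrancl_last[OF wp x] by simp
qed

lemma Darc_DV: "(a, b) \<in> D \<Longrightarrow> a \<in> DV E w s t \<and> b \<in> DV E w s t"
  by (auto simp: Darc_def DV_def intro: nth_mem)

lemma Darc_trancl_DV: "(a, b) \<in> D\<^sup>+ \<Longrightarrow> a \<in> DV E w s t \<and> b \<in> DV E w s t"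
  by (induction rule: trancl_induct) (auto dest: Darc_DV)

lemma Darc_rtrancl_walk_len:
  "(a, b) \<in> D\<^sup>* \<Longrightarrow> \<exists>q. walk E q a b \<and> walk_len w q = ds b - ds a"
proof (induction rule: rtrancl_induct)
  case base
  show ?case by (auto intro: exI[of _ "[a]"])
next
  case (step y z)
  then obtain q where q: "walk E q a y" "walk_len w q = ds y - ds a" by blast
  have yz: "(y, z) \<in> E" "ds z = ds y + w y z" using Darc_edge[OF step(2)] by auto
  then have "walk E (q @ tl [y, z]) a z"
    using q(1) by (intro walk_append) (auto simp: walk_Cons_Cons)
  moreover have "walk_len w (q @ tl [y, z]) = walk_len w q + walk_len w [y, z]"
    using q(1) by (intro walk_len_append) (auto simp: walk_def)
  then have "walk_len w (q @ tl [y, z]) = ds z - ds a"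
    using q(2) yz(2) by simp
  ultimately show ?case by (intro exI conjI)
qed

text \<open>Not a simp rule: the right-hand side contains instances of the left-hand side.\<close>

lemma dist_Darc_rtrancl:
  assumes "(s, a) \<in> D\<^sup>*" and "(a, b) \<in> D\<^sup>*"
  shows "dist_G E w a b = ds b - ds a"
proof -
  obtain r where r: "walk E r s a" using Darc_rtrancl_walk_len[OF assms(1)] by blast
  obtain q where q: "walk E q a b" "walk_len w q = ds b - ds a"
    using Darc_rtrancl_walk_len[OF assms(2)] by blast
  show ?thesis using dist_le_walk_len[OF q(1)] q(2) dist_triangle[OF r q(1)] by linarith
qed

lemma Is_dominates:
  "(s, x) \<in> D\<^sup>* \<Longrightarrow> x \<noteq> s \<Longrightarrow> dominates D s (Is E w s t x) x"
  unfolding Is_eq_idom by (rule idom_dominates[where f = ds]) (auto dest: ds_less_Darc)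

lemma It_dominates:
  "(x, t) \<in> D\<^sup>* \<Longrightarrow> x \<noteq> t \<Longrightarrow> dominates (D\<inverse>) t (It E w s t x) x"
  unfolding It_eq_idom
  by (rule idom_dominates[where f = "\<lambda>v. - ds v"]) (auto simp: rtrancl_converse dest: ds_less_Darc)

lemma Darc_trancl_It:
  assumes ux: "(u, x) \<in> D\<^sup>+" and "(x, t) \<in> D\<^sup>*"
    and yIt: "(y, It E w s t u) \<in> D\<^sup>+" and "ds x \<le> ds y"
  shows "(x, It E w s t u) \<in> D\<^sup>+"
proof -
  have "u \<noteq> t" using ds_less_Darc_trancl[OF ux] ds_le_Darc_rtrancl[OF assms(2)] by auto
  then have "dominates (D\<inverse>) t (It E w s t u) u"
    using ux assms(2) by (intro It_dominates) auto
  then have "(x, It E w s t u) \<in> D\<^sup>* \<or> (It E w s t u, x) \<in> D\<^sup>+"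
    using dominates_comparable[of "D\<inverse>" t _ u x] ux assms(2)
    by (auto simp: rtrancl_converse trancl_converse dest: trancl_into_rtrancl)
  moreover have "ds x < ds (It E w s t u)"
    using ds_less_Darc_trancl[OF yIt] assms(4) by simp
  ultimately show ?thesis
    using ds_less_Darc_trancl[of "It E w s t u" x] by (auto simp: rtrancl_eq_or_trancl)
qed

lemma ds_le_Is:
  assumes su: "(s, u) \<in> D\<^sup>*" and ux: "(u, x) \<in> D\<^sup>+"
    and not_Is_u: "(Is E w s t x, u) \<notin> D\<^sup>+"
  shows "ds u \<le> ds (Is E w s t x)"
proof -
  have "x \<noteq> s" using ds_le_Darc_rtrancl[OF su] ds_less_Darc_trancl[OF ux] by auto
  then have "dominates D s (Is E w s t x) x"
    using su ux by (intro Is_dominates) auto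
  then have "(Is E w s t x, u) \<in> D\<^sup>* \<or> (u, Is E w s t x) \<in> D\<^sup>+"
    using dominates_comparable[OF _ su trancl_into_rtrancl[OF ux]] by blast
  then show ?thesis
    using not_Is_u ds_less_Darc_trancl[of u "Is E w s t x"] by (auto simp: rtrancl_eq_or_trancl)
qed

lemma gstar_less_if_finite:
  assumes "gstar E w s t x \<noteq> \<infinity>"
  shows "gstar E w s t x < ereal (ds x - ds (Is E w s t x))"
proof -
  have "\<not> (\<forall>y \<in> DV E w s t. gfun E w s t x y = top)"
    using assms unfolding gstar_def top_ereal_def[symmetric] by simp
  then obtain y where yDV: "y \<in> DV E w s t" and gy: "gfun E w s t x y \<noteq> \<infinity>"
    by (auto simp: top_ereal_def)
  then have "y \<in> Cset E w s t x" and gxy: "gfun E w s t x y = ereal (dist_G E w y x)"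
    by (simp_all add: gfun_def split: if_splits)
  then have Is_y: "(Is E w s t x, y) \<in> D\<^sup>+" and yx: "(y, x) \<in> D\<^sup>+"
    by (simp_all add: Cset_def prec_def)
  have "gstar E w s t x \<le> gfun E w s t x y" using gstar_le_gfun[OF yDV] .
  also have "\<dots> = ereal (ds x - ds y)"
    using gxy dist_Darc_rtrancl[OF conjunct1[OF DV_rtrancl[OF yDV]] trancl_into_rtrancl[OF yx]]
    by simp
  also have "\<dots> < ereal (ds x - ds (Is E w s t x))"
    using ds_less_Darc_trancl[OF Is_y] by simp
  finally show ?thesis .
qed

lemma gstar_le_gfun_common_ancestor:
  assumes su: "(s, u) \<in> D\<^sup>*" and uvj: "(u, vj) \<in> D\<^sup>+" and uvi: "(u, vi) \<in> D\<^sup>+"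
    and le: "ds vj \<le> ds vi" and fin: "gstar E w s t vj \<noteq> \<infinity>"
  shows "gstar E w s t vj \<le> gfun E w s t vi u"
proof (cases "gfun E w s t vi u = \<infinity>")
  case False
  then have It_vi: "(vi, It E w s t u) \<in> D\<^sup>+" and "gfun E w s t vi u = ereal (dist_G E w u vi)"
    by (simp_all add: gfun_def prec_def split: if_splits)
  with dist_Darc_rtrancl[OF su trancl_into_rtrancl[OF uvi]]
  have gvi: "gfun E w s t vi u = ereal (ds vi - ds u)" by simp
  have "(vj, t) \<in> D\<^sup>*" using DV_rtrancl Darc_trancl_DV[OF uvj] by blast
  with It_vi have vj_It: "(vj, It E w s t u) \<in> D\<^sup>+"
    using Darc_trancl_It[OF uvj] le by blast
  show ?thesis
  proof (cases "(Is E w s t vj, u) \<in> D\<^sup>+")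
    case True
    have "gstar E w s t vj \<le> gfun E w s t vj u"
      using gstar_le_gfun conjunct1[OF Darc_trancl_DV[OF uvj]] .
    also have "\<dots> = ereal (dist_G E w u vj)"
      using True vj_It uvj by (simp add: gfun_def Cset_def prec_def)
    also have "\<dots> = ereal (ds vj - ds u)"
      using dist_Darc_rtrancl[OF su trancl_into_rtrancl[OF uvj]] by simp
    also have "\<dots> \<le> gfun E w s t vi u"
      using gvi le by simp
    finally show ?thesis .
  next
    case False
    have "gstar E w s t vj < ereal (ds vj - ds (Is E w s t vj))"
      using gstar_less_if_finite[OF fin] .
    also have "\<dots> \<le> gfun E w s t vi u"
      using ds_le_Is[OF su uvj False] gvi le by simp
    finally show ?thesis by simp
  qed
qed simp

end

theorem lemma9:
  fixes V :: "'a set" and E :: "('a \<times> 'a) set" and w :: "'a \<Rightarrow> 'a \<Rightarrow> real"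
    and s t y vi vj :: 'a
  assumes "finite V"
    and "E \<subseteq> V \<times> V"
    and "sym E"
    and "\<forall>v. (v, v) \<notin> E"
    and "\<forall>u v. (u, v) \<in> E \<longrightarrow> w u v > 0 \<and> w u v = w v u"
    and "\<forall>u\<in>V. \<forall>v\<in>V. \<exists>p. walk E p u v"
    and "s \<in> V" and "t \<in> V"
    and "y \<in> DV E w s t"
    and "prec E w s t y vj" and "prec E w s t y vi"
    and "dist_G E w s vj \<le> dist_G E w s vi"
    and "gstar E w s t vj \<noteq> \<infinity>"
  shows "(INF u \<in> {u. prec E w s t u y}. gfun E w s t vi u) \<ge> gstar E w s t vj"
proof (rule INF_greatest)
  interpret positive_lengths E w s t
    using assms(5) by unfold_locales blast
  fix u assume "u \<in> {u. prec E w s t u y}"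
  then have uy: "(u, y) \<in> D\<^sup>+" by (simp add: prec_def)
  then have "(s, u) \<in> D\<^sup>*" using Darc_trancl_DV DV_rtrancl by blast
  moreover have "(u, vj) \<in> D\<^sup>+" "(u, vi) \<in> D\<^sup>+"
    using uy assms(10,11) by (auto simp: prec_def)
  ultimately show "gstar E w s t vj \<le> gfun E w s t vi u"
    using gstar_le_gfun_common_ancestor assms(12,13) by blast
qed

end
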